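(* Let $(M,d,\mu)$ be a quasi-$b$-geodesic metric measure space with $\mu$ satisfying $(VD)_{\mathrm{loc}}$ and $(VD)_\infty$. Then there exist $c,\gamma>0$ such that $$\frac{V(x,r)}{V(x,s)}\ge c\left(\frac rs\right)^\gamma$$ for all $x\in M$ and all $b\le s\le r\le\operatorname{diam}(M)$, where $\operatorname{diam}(M)=\sup\{d(x,y):x,y\in M\}$.
   Context: Metric measure space: locally compact metric space with a Radon measure $\mu$ of full support; $B(x,r)=\{y:d(x,y)\le r\}$, $V(x,r)=\mu(B(x,r))$. Quasi-$b$-geodesic: there is $C$ with $d_b\le Cd$, where $d_b(x,y)=\inf\sum_i d(x_i,x_{i+1})$ over sequences $x=x_0,\dots,x_m=y$ with $d(x_i,x_{i+1})\le b$. $(VD)_{\mathrm{loc}}$: for each $r>0$ there is $C_r$ with $V(x,2r)\le C_rV(x,r)$ for all $x$. $(VD)_\infty$: there are $r_0,C>0$ with $V(x,2r)\le CV(x,r)$ for all $x$, $r\ge r_0$. *)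

theory Defs
  imports "HOL-Analysis.Analysis"
begin

definition radon_measure :: "'a::metric_space measure \<Rightarrow> bool" where
  "radon_measure \<mu> \<longleftrightarrow>
     sets \<mu> = sets borel \<and>
     (\<forall>K. compact K \<longrightarrow> emeasure \<mu> K < \<infinity>) \<and>
     (\<forall>A \<in> sets borel. emeasure \<mu> A = (INF U \<in> {U. open U \<and> A \<subseteq> U}. emeasure \<mu> U)) \<and>
     (\<forall>U. open U \<longrightarrow> emeasure \<mu> U = (SUP K \<in> {K. compact K \<and> K \<subseteq> U}. emeasure \<mu> K))"

definition full_support :: "'a::metric_space measure \<Rightarrow> bool" where
  "full_support \<mu> \<longleftrightarrow> (\<forall>U. open U \<and> U \<noteq> {} \<longrightarrow> emeasure \<mu> U > 0)"

definition vol :: "'a::metric_space measure \<Rightarrow> 'a \<Rightarrow> real \<Rightarrow> ennreal" where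
  "vol \<mu> x r = emeasure \<mu> (cball x r)"

definition b_chain :: "real \<Rightarrow> 'a::metric_space list \<Rightarrow> 'a \<Rightarrow> 'a \<Rightarrow> bool" where
  "b_chain b xs x y \<longleftrightarrow> xs \<noteq> [] \<and> hd xs = x \<and> last xs = y \<and>
     (\<forall>i. Suc i < length xs \<longrightarrow> dist (xs ! i) (xs ! Suc i) \<le> b)"

definition chain_length :: "'a::metric_space list \<Rightarrow> real" where
  "chain_length xs = (\<Sum>i<length xs - 1. dist (xs ! i) (xs ! Suc i))"

text \<open>The b-distance d_b (infimum over b-chains; \<open>\<infinity>\<close> if no chain exists).\<close>
definition dist_b :: "real \<Rightarrow> 'a::metric_space \<Rightarrow> 'a \<Rightarrow> ereal" where
  "dist_b b x y = (INF xs \<in> {xs. b_chain b xs x y}. ereal (chain_length xs))"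

definition quasi_b_geodesic :: "real \<Rightarrow> 'a::metric_space itself \<Rightarrow> bool" where
  "quasi_b_geodesic b _ \<longleftrightarrow> (\<exists>C. \<forall>x y::'a. dist_b b x y \<le> ereal (C * dist x y))"

definition VD_loc :: "'a::metric_space measure \<Rightarrow> bool" where
  "VD_loc \<mu> \<longleftrightarrow> (\<forall>r>0. \<exists>C. \<forall>x. vol \<mu> x (2 * r) \<le> ennreal C * vol \<mu> x r)"

definition VD_infty :: "'a::metric_space measure \<Rightarrow> bool" where
  "VD_infty \<mu> \<longleftrightarrow> (\<exists>r0>0. \<exists>C>0. \<forall>x. \<forall>r\<ge>r0. vol \<mu> x (2 * r) \<le> ennreal C * vol \<mu> x r)"

definition diam_space :: "'a::metric_space itself \<Rightarrow> ereal" where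
  "diam_space _ = (SUP p \<in> (UNIV :: ('a \<times> 'a) set). ereal (dist (fst p) (snd p)))"

end

theory Submission imports Defs begin

text \<open>If \<open>8t\<close> does not exceed the diameter, the space extends beyond distance \<open>3t\<close> from \<open>x\<close>,
  so any \<open>b\<close>-chain leaving \<open>cball x (2t)\<close> stops first in the shell \<open>2t < d(x,z) \<le> 2t + b \<le> 3t\<close>.
  The ball \<open>B(z,t)\<close> is then disjoint from \<open>B(x,t)\<close>, lies in \<open>B(x,8t)\<close>, and by doubling at scales
  \<open>\<ge> t\<close> has volume \<open>\<ge> V(x,t)/C\<^sup>2\<close> because \<open>B(x,t) \<subseteq> B(z,4t)\<close>.  Hence \<open>V(x,8t) \<ge> (1 + 1/C\<^sup>2) V(x,t)\<close>
  for large \<open>t\<close>, and iterating this gives a power lower bound; below the scale where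
  \<open>(VD)\<^sub>\<infinity>\<close> applies only monotonicity of \<open>V\<close> is used, which costs a constant.\<close>

lemma b_chain_exits_ball:
  assumes "b_chain b xs x y" "a < dist x y" "0 \<le> a"
  shows "\<exists>z. a < dist x z \<and> dist x z \<le> a + b"
proof -
  define P where "P i \<longleftrightarrow> i < length xs \<and> a < dist x (xs ! i)" for i
  have ne: "xs \<noteq> []" and hd: "hd xs = x" and la: "last xs = y"
    and step: "\<And>i. Suc i < length xs \<Longrightarrow> dist (xs ! i) (xs ! Suc i) \<le> b"
    using assms(1) unfolding b_chain_def by auto
  have "P (length xs - 1)" using ne la assms(2) by (simp add: P_def last_conv_nth)
  define i where "i = (LEAST i. P i)"
  have Pi: "P i" unfolding i_def by (rule LeastI) fact
  have "i \<noteq> 0" using Pi hd ne assms(3) unfolding P_def by (metis dist_self hd_conv_nth not_less)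
  then obtain j where ij: "i = Suc j" by (cases i) auto
  have "\<not> P j" using ij unfolding i_def using not_less_Least[of j P] by simp
  then have "dist x (xs ! j) \<le> a" using Pi ij unfolding P_def by auto
  moreover have "dist (xs ! j) (xs ! i) \<le> b" using step Pi ij unfolding P_def by auto
  ultimately have "dist x (xs ! i) \<le> a + b" using dist_triangle[of x "xs ! i" "xs ! j"] by linarith
  then show ?thesis using Pi unfolding P_def by blast
qed

lemma quasi_b_geodesic_imp_b_chain:
  fixes x y :: "'a::metric_space"
  assumes "quasi_b_geodesic b TYPE('a)"
  shows "\<exists>xs. b_chain b xs x y"
proof (rule ccontr)
  assume "\<nexists>xs. b_chain b xs x y"
  then have "dist_b b x y = \<infinity>" unfolding dist_b_def by (simp add: top_ereal_def)
  moreover obtain C where "dist_b b x y \<le> ereal (C * dist x y)"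
    using assms unfolding quasi_b_geodesic_def by blast
  ultimately show False by simp
qed

lemma exists_far_point:
  fixes x :: "'a::metric_space"
  assumes "ereal (2 * a) < diam_space TYPE('a)"
  shows "\<exists>y. a < dist x y"
proof (rule ccontr)
  obtain p :: "'a \<times> 'a" where p: "2 * a < dist (fst p) (snd p)"
    using assms unfolding diam_space_def less_SUP_iff by auto
  assume "\<nexists>y. a < dist x y"
  then have "dist x (fst p) \<le> a" "dist x (snd p) \<le> a" by (auto simp: not_less)
  then show False using p dist_triangle3[of "fst p" "snd p" x] by linarith
qed

lemma emeasure_cball_finite:
  fixes \<mu> :: "'a::metric_space measure"
  assumes "locally_compact_space (euclidean :: 'a topology)"
    and sets: "sets \<mu> = sets borel"
    and compact_finite: "\<And>K. compact K \<Longrightarrow> emeasure \<mu> K < \<infinity>"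
    and "VD_loc \<mu>"
  shows "emeasure \<mu> (cball x r) < \<infinity>"
proof -
  obtain U K where UK: "open U" "compact K" "x \<in> U" "U \<subseteq> K"
    using assms(1) unfolding locally_compact_space_def by (auto simp: compactin_euclidean_iff) blast
  obtain e where e: "e > 0" "ball x e \<subseteq> U" using UK openE by blast
  have "cball x (e/2) \<subseteq> K" using e UK(4) by (auto simp: subset_iff)
  moreover have "K \<in> sets \<mu>" using sets UK(2) compact_imp_closed borel_closed by auto
  ultimately have small: "emeasure \<mu> (cball x (e/2)) < \<infinity>"
    using emeasure_mono compact_finite[OF UK(2)] by (meson order.strict_trans1)
  have dyadic: "emeasure \<mu> (cball x (2^n * (e/2))) < \<infinity>" for n
  proof (induction n)
    case 0 then show ?case using small by simp
  next
    case (Suc n)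
    obtain C where "\<forall>y. vol \<mu> y (2 * (2^n * (e/2))) \<le> ennreal C * vol \<mu> y (2^n * (e/2))"
      using assms(4) e(1) unfolding VD_loc_def by (metis half_gt_zero zero_less_numeral zero_less_power mult_pos_pos)
    then have "emeasure \<mu> (cball x (2^Suc n * (e/2))) \<le> ennreal C * emeasure \<mu> (cball x (2^n * (e/2)))"
      unfolding vol_def by (simp add: mult.assoc)
    also have "\<dots> < \<infinity>" using Suc by (simp add: ennreal_mult_less_top)
    finally show ?case .
  qed
  obtain n where "r / (e/2) < 2^n" using real_arch_pow[of 2] by auto
  then have "cball x r \<subseteq> cball x (2^n * (e/2))" using e(1) by (auto simp: field_simps)
  moreover have "cball x (2^n * (e/2)) \<in> sets \<mu>" using sets by simp
  ultimately show ?thesis using emeasure_mono dyadic by (meson order.strict_trans1)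
qed

lemma measure_cball_pos:
  fixes \<mu> :: "'a::metric_space measure"
  assumes "full_support \<mu>" "sets \<mu> = sets borel" "emeasure \<mu> (cball x r) < \<infinity>" "0 < r"
  shows "0 < measure \<mu> (cball x r)"
proof -
  have "0 < emeasure \<mu> (ball x r)" using assms(1,4) unfolding full_support_def by auto
  also have "\<dots> \<le> emeasure \<mu> (cball x r)" using assms(2) by (intro emeasure_mono) auto
  finally show ?thesis using assms(2,3) by (simp add: emeasure_eq_measure2 fmeasurableI)
qed

lemma measure_cball_doubling_of_VD_infty:
  fixes \<mu> :: "'a::metric_space measure"
  assumes "VD_infty \<mu>" "sets \<mu> = sets borel" "\<And>x r. emeasure \<mu> (cball x r) < \<infinity>"
  obtains R C where "0 < R" "0 < C"
    "\<And>x r. R \<le> r \<Longrightarrow> measure \<mu> (cball x (2 * r)) \<le> C * measure \<mu> (cball x r)"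
proof -
  obtain R C where R: "0 < R" and C: "0 < C"
    and vol_doubling: "\<And>x r. R \<le> r \<Longrightarrow> vol \<mu> x (2 * r) \<le> ennreal C * vol \<mu> x r"
    using assms(1) unfolding VD_infty_def by blast
  have vol: "vol \<mu> x r = ennreal (measure \<mu> (cball x r))" for x r
    using assms(2,3) unfolding vol_def by (simp add: emeasure_eq_measure2 fmeasurableI)
  have "measure \<mu> (cball x (2 * r)) \<le> C * measure \<mu> (cball x r)" if "R \<le> r" for x r
    using vol_doubling[OF that, of x] C unfolding vol by (simp add: ennreal_mult[symmetric])
  with R C that show ?thesis by blast
qed

lemma measure_cball_reverse_doubling:
  fixes \<mu> :: "'a::metric_space measure"
  assumes sets: "sets \<mu> = sets borel"
    and finite: "\<And>x r. emeasure \<mu> (cball x r) < \<infinity>"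
    and doubling: "\<And>x r. R \<le> r \<Longrightarrow> measure \<mu> (cball x (2 * r)) \<le> C * measure \<mu> (cball x r)"
    and C: "C > 0" and b: "0 < b" "b \<le> R"
    and geodesic: "quasi_b_geodesic b TYPE('a)"
    and t: "R \<le> t" "ereal (8 * t) \<le> diam_space TYPE('a)"
  shows "(1 + 1 / C\<^sup>2) * measure \<mu> (cball x t) \<le> measure \<mu> (cball x (8 * t))"
proof -
  have fmeasurable: "cball y r \<in> fmeasurable \<mu>" for y r
    using sets finite by (intro fmeasurableI) auto
  have mono: "measure \<mu> (cball y r) \<le> measure \<mu> (cball y' r')" if "cball y r \<subseteq> cball y' r'" for y y' r r'
    using that fmeasurable by (intro measure_mono_fmeasurable) (auto intro: fmeasurableD)
  have t_pos: "0 < t" using b t(1) by linarith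
  then have "ereal (2 * (3 * t)) < ereal (8 * t)" by simp
  then have "ereal (2 * (3 * t)) < diam_space TYPE('a)" using t(2) by (rule order.strict_trans2)
  then obtain y where "3 * t < dist x y" using exists_far_point by blast
  moreover obtain xs where "b_chain b xs x y" using quasi_b_geodesic_imp_b_chain[OF geodesic] by blast
  ultimately obtain z where z: "2 * t < dist x z" "dist x z \<le> 2 * t + b"
    using b_chain_exits_ball[of b xs x y "2 * t"] t_pos by auto
  have z3: "dist x z \<le> 3 * t" using z(2) b t(1) by linarith
  have "cball x t \<inter> cball z t = {}"
  proof (rule ccontr)
    assume "cball x t \<inter> cball z t \<noteq> {}"
    then obtain w where "dist x w \<le> t" "dist z w \<le> t" by auto
    then show False using z(1) dist_triangle3[of x z w] by (simp add: dist_commute)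
  qed
  then have "measure \<mu> (cball x t) + measure \<mu> (cball z t) = measure \<mu> (cball x t \<union> cball z t)"
    using finite sets by (intro measure_Union[symmetric]) (auto simp: less_top)
  also have "\<dots> \<le> measure \<mu> (cball x (8 * t))"
  proof (rule measure_mono_fmeasurable)
    show "cball x t \<union> cball z t \<subseteq> cball x (8 * t)"
    proof
      fix w assume "w \<in> cball x t \<union> cball z t"
      then show "w \<in> cball x (8 * t)" using z3 t_pos dist_triangle[of x w z] by auto
    qed
  qed (use fmeasurable in \<open>auto intro: fmeasurableD\<close>)
  finally have disjoint_balls: "measure \<mu> (cball x t) + measure \<mu> (cball z t) \<le> measure \<mu> (cball x (8 * t))" .
  have "measure \<mu> (cball x t) \<le> measure \<mu> (cball z (2 * (2 * t)))"
  proof (rule mono, rule subsetI)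
    fix w assume "w \<in> cball x t"
    then show "w \<in> cball z (2 * (2 * t))"
      using z3 dist_triangle[of z w x] by (simp add: dist_commute)
  qed
  also have "\<dots> \<le> C * measure \<mu> (cball z (2 * t))" using doubling[of "2 * t" z] t(1) t_pos by linarith
  also have "\<dots> \<le> C * (C * measure \<mu> (cball z t))"
    using doubling[of t z] t(1) C by (intro mult_left_mono) auto
  finally have "measure \<mu> (cball x t) / C\<^sup>2 \<le> measure \<mu> (cball z t)"
    using C by (simp add: field_simps power2_eq_square)
  then show ?thesis using disjoint_balls by (simp add: algebra_simps)
qed

lemma geometric_growth_iterate:
  fixes f :: "real \<Rightarrow> real" and D :: ereal
  assumes step: "\<And>t. R \<le> t \<Longrightarrow> ereal (l * t) \<le> D \<Longrightarrow> q * f t \<le> f (l * t)"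
    and l: "1 \<le> l" and q: "0 \<le> q" and R: "0 \<le> R"
  shows "R \<le> s \<Longrightarrow> ereal (l ^ k * s) \<le> D \<Longrightarrow> q ^ k * f s \<le> f (l ^ k * s)"
proof (induction k arbitrary: s)
  case 0
  then show ?case by simp
next
  case (Suc k)
  have s: "0 \<le> s" using Suc.prems(1) R by linarith
  then have "s \<le> l * s" using l by (simp add: mult_le_cancel_right1)
  then have Rls: "R \<le> l * s" using Suc.prems(1) by linarith
  have "l * s \<le> l ^ Suc k * s" using l s by (simp add: mult_right_mono)
  then have "ereal (l * s) \<le> D" using Suc.prems(2) by (meson ereal_less_eq(3) order.trans)
  then have "q ^ k * (q * f s) \<le> q ^ k * f (l * s)" using step Suc.prems(1) q by (simp add: mult_left_mono)
  also have "\<dots> \<le> f (l ^ k * (l * s))"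
    using Suc.IH[OF Rls] Suc.prems(2) by (simp add: ac_simps)
  finally show ?case by (simp add: ac_simps)
qed

lemma powr_log_le_power_floor_log:
  fixes l q \<rho> :: real
  assumes l: "1 < l" and q: "1 < q" and \<rho>: "0 < \<rho>"
  shows "\<rho> powr log l q \<le> q * q ^ nat \<lfloor>log l \<rho>\<rfloor>"
proof (cases "\<rho> < 1")
  case True
  then have "\<rho> powr log l q \<le> 1" using l q \<rho> by (intro powr_le1) auto
  also have "\<dots> \<le> q ^ nat \<lfloor>log l \<rho>\<rfloor>" using q by (simp add: one_le_power)
  also have "\<dots> \<le> q * q ^ nat \<lfloor>log l \<rho>\<rfloor>" using q by (simp add: mult_le_cancel_right1)
  finally show ?thesis .
next
  case False
  then have log_nonneg: "0 \<le> log l \<rho>" using l by simp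
  have "\<rho> powr log l q = (l powr log l \<rho>) powr log l q" using l \<rho> by simp
  also have "\<dots> = (l powr log l q) powr log l \<rho>" by (rule powr_powr_swap)
  also have "\<dots> = q powr log l \<rho>" using l q by simp
  also have "\<dots> \<le> q powr (1 + real (nat \<lfloor>log l \<rho>\<rfloor>))"
    using q log_nonneg by (intro powr_mono) linarith+
  also have "\<dots> = q * q ^ nat \<lfloor>log l \<rho>\<rfloor>" using q by (simp add: powr_add powr_realpow)
  finally show ?thesis .
qed

lemma power_lower_bound_of_geometric_growth:
  fixes f :: "real \<Rightarrow> real" and D :: ereal
  assumes mono: "\<And>s r. b \<le> s \<Longrightarrow> s \<le> r \<Longrightarrow> f s \<le> f r"
    and pos: "\<And>s. b \<le> s \<Longrightarrow> 0 < f s"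
    and step: "\<And>t. R \<le> t \<Longrightarrow> ereal (l * t) \<le> D \<Longrightarrow> q * f t \<le> f (l * t)"
    and l: "1 < l" and q: "1 < q" and b: "0 < b" "b \<le> R"
    and sr: "b \<le> s" "s \<le> r" "ereal r \<le> D"
  shows "(b / R) powr log l q / q * (r / s) powr log l q \<le> f r / f s"
proof -
  define \<gamma> where "\<gamma> = log l q"
  define s' where "s' = max s R"
  define k where "k = nat \<lfloor>log l (r / s')\<rfloor>"
  have s'_pos: "0 < s'" using b unfolding s'_def by linarith
  have growth: "q ^ k * f s \<le> f r"
  proof (cases "r / s' < 1")
    case True
    then have "log l (r / s') < 0" using l s'_pos sr b by simp
    then have "k = 0" unfolding k_def by simp
    then show ?thesis using mono sr by simp
  next
    case False
    have "l ^ k = l powr real k" using l by (simp add: powr_realpow)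
    also have "\<dots> \<le> l powr log l (r / s')"
      using False l unfolding k_def by (intro powr_mono) auto
    also have "\<dots> = r / s'" using False l s'_pos by simp
    finally have lks': "l ^ k * s' \<le> r" using s'_pos by (simp add: field_simps)
    have "q ^ k * f s \<le> q ^ k * f s'" using mono sr(1) q unfolding s'_def by simp
    also have "\<dots> \<le> f (l ^ k * s')"
    proof (rule geometric_growth_iterate[where R = R and D = D])
      show "ereal (l ^ k * s') \<le> D" using lks' sr(3) by (meson ereal_less_eq(3) order.trans)
    qed (use step l q b in \<open>auto simp: s'_def\<close>)
    also have "\<dots> \<le> f r" using mono lks' l b sr(1) unfolding s'_def
      by (smt (verit) max.cobounded1 mult_le_cancel_right1 one_le_power)
    finally show ?thesis .
  qed
  have "(b / R) * (r / s) \<le> r / s'"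
    using b sr unfolding s'_def by (auto simp: field_simps max_def mult_mono)
  then have "(b / R) powr \<gamma> * (r / s) powr \<gamma> \<le> (r / s') powr \<gamma>"
    using b sr l q unfolding \<gamma>_def by (subst powr_mult[symmetric]) (auto intro: powr_mono2)
  also have "\<dots> \<le> q * q ^ k"
    unfolding \<gamma>_def k_def using l q b sr s'_pos by (intro powr_log_le_power_floor_log) auto
  finally have "(b / R) powr \<gamma> / q * (r / s) powr \<gamma> \<le> q ^ k" using q by (simp add: field_simps)
  also have "\<dots> \<le> f r / f s" using growth pos sr(1) by (simp add: field_simps)
  finally show ?thesis unfolding \<gamma>_def .
qed

theorem lemma2p12:
  fixes \<mu> :: "'a::metric_space measure" and b :: real
  assumes "locally_compact_space (euclidean :: 'a topology)"
    and "radon_measure \<mu>"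
    and "full_support \<mu>"
    and "b > 0"
    and "quasi_b_geodesic b TYPE('a)"
    and "VD_loc \<mu>"
    and "VD_infty \<mu>"
  shows "\<exists>c \<gamma>. c > 0 \<and> \<gamma> > 0 \<and>
           (\<forall>x r s. b \<le> s \<and> s \<le> r \<and> ereal r \<le> diam_space TYPE('a) \<longrightarrow>
              measure \<mu> (cball x r) / measure \<mu> (cball x s) \<ge> c * (r / s) powr \<gamma>)"
proof -
  have sets: "sets \<mu> = sets borel" using assms(2) unfolding radon_measure_def by auto
  have finite: "emeasure \<mu> (cball x r) < \<infinity>" for x r
    using assms(1,2,6) sets by (intro emeasure_cball_finite) (auto simp: radon_measure_def)
  obtain R0 C where "0 < R0" and C: "0 < C"
    and doubling: "\<And>x r. R0 \<le> r \<Longrightarrow> measure \<mu> (cball x (2 * r)) \<le> C * measure \<mu> (cball x r)"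
    using measure_cball_doubling_of_VD_infty[OF assms(7) sets finite] by blast
  define R where "R = max R0 b"
  define q where "q = 1 + 1 / C\<^sup>2"
  have q: "1 < q" using C unfolding q_def by simp
  have growth: "q * measure \<mu> (cball x t) \<le> measure \<mu> (cball x (8 * t))"
    if "R \<le> t" "ereal (8 * t) \<le> diam_space TYPE('a)" for x t
    unfolding q_def
  proof (rule measure_cball_reverse_doubling[OF sets finite _ C assms(4) _ assms(5) that])
    show "measure \<mu> (cball y (2 * r)) \<le> C * measure \<mu> (cball y r)" if "R \<le> r" for y r
      using doubling that by (simp add: R_def)
  qed (simp add: R_def)
  have mono: "measure \<mu> (cball x s) \<le> measure \<mu> (cball x r)" if "s \<le> r" for x s r
    using that sets finite by (intro measure_mono_fmeasurable) (auto intro: fmeasurableI)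
  have pos: "0 < measure \<mu> (cball x s)" if "b \<le> s" for x s
    using measure_cball_pos[OF assms(3) sets finite] that assms(4) by simp
  show ?thesis
  proof (intro exI conjI allI impI)
    show "0 < (b / R) powr log 8 q / q" "0 < log 8 q" using q assms(4) by (auto simp: R_def)
    fix x r s assume "b \<le> s \<and> s \<le> r \<and> ereal r \<le> diam_space TYPE('a)"
    then show "(b / R) powr log 8 q / q * (r / s) powr log 8 q \<le> measure \<mu> (cball x r) / measure \<mu> (cball x s)"
      using mono pos growth q assms(4)
      by (intro power_lower_bound_of_geometric_growth[where l = 8 and D = "diam_space TYPE('a)"]) (auto simp: R_def)
  qed
qed

end
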